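(* Let $z,r,z',r'$ be real numbers with $z^2+r^2\le1$ and $z'^2+r'^2\le 1$, and set $$\rho=\frac12\begin{pmatrix}1+z & r\\ r & 1-z\end{pmatrix},\qquad \rho'=\frac12\begin{pmatrix}1+z' & r'\\ r' & 1-z'\end{pmatrix}.$$ Then there exists an incoherent operation (IO) $\Lambda$ with $\Lambda(\rho)=\rho'$ if and only if $$(1-z^2)\,r'^2\le (1-z'^2)\,r^2\qquad\text{and}\qquad |r'|\le |r|$$ (for $r\neq0$ the first condition reads $z'^2+(1-z^2)\,r'^2/r^2\le 1$). The same characterization holds with IO replaced by strictly incoherent operation (SIO).
   Context: Fix the computational (incoherent) basis $\{|0\rangle,|1\rangle\}$ of $\mathbb{C}^2$; a state is incoherent if it is diagonal in this basis. An incoherent operation (IO) is a quantum channel with Kraus operators $\{K_n\}$, $\sum_n K_n^\dagger K_n=I$, such that $K_n\delta K_n^\dagger$ is diagonal for every diagonal $\delta$ (equivalently, each $K_n$ has at most one nonzero entry in every column). A strictly incoherent operation (SIO) is an IO whose Kraus operators additionally satisfy that $K_n^\dagger\delta K_n$ is diagonal for every diagonal $\delta$ (equivalently, each $K_n$ has at most one nonzero entry in every row and every column). *)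

theory Defs
  imports "HOL-Analysis.Analysis"
begin

type_synonym cmat2 = "complex^2^2"

definition mat2 :: "complex \<Rightarrow> complex \<Rightarrow> complex \<Rightarrow> complex \<Rightarrow> cmat2" where
  "mat2 a b c d = (\<chi> i j. if i = 0 then (if j = 0 then a else b) else (if j = 0 then c else d))"

definition cadj :: "cmat2 \<Rightarrow> cmat2" where
  "cadj A = (\<chi> i j. cnj (A $ j $ i))"

definition is_diag :: "cmat2 \<Rightarrow> bool" where
  "is_diag A \<longleftrightarrow> (\<forall>i j. i \<noteq> j \<longrightarrow> A $ i $ j = 0)"

definition is_kraus :: "cmat2 list \<Rightarrow> bool" where
  "is_kraus Ks \<longleftrightarrow> sum_list (map (\<lambda>K. cadj K ** K) Ks) = mat 1"

definition apply_kraus :: "cmat2 list \<Rightarrow> cmat2 \<Rightarrow> cmat2" where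
  "apply_kraus Ks \<rho> = sum_list (map (\<lambda>K. K ** \<rho> ** cadj K) Ks)"

definition IO :: "cmat2 list \<Rightarrow> bool" where
  "IO Ks \<longleftrightarrow> is_kraus Ks \<and>
     (\<forall>K \<in> set Ks. \<forall>\<delta>. is_diag \<delta> \<longrightarrow> is_diag (K ** \<delta> ** cadj K))"

definition SIO :: "cmat2 list \<Rightarrow> bool" where
  "SIO Ks \<longleftrightarrow> IO Ks \<and>
     (\<forall>K \<in> set Ks. \<forall>\<delta>. is_diag \<delta> \<longrightarrow> is_diag (cadj K ** \<delta> ** K))"

definition qubit :: "real \<Rightarrow> real \<Rightarrow> cmat2" where
  "qubit z r = mat2 (complex_of_real ((1 + z) / 2)) (complex_of_real (r / 2))
                    (complex_of_real (r / 2)) (complex_of_real ((1 - z) / 2))"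

end

theory Submission
  imports Defs
begin

text \<open>
  Write \<rho> = [[p, h], [h, q]] with p + q = 1. An incoherent Kraus operator K has at most one
  nonzero entry per column, so K \<rho> K\<dagger> = [[P, h \<kappa>], [h cnj \<kappa>, Q]] with P Q = p q |\<kappa>|^2,
  where \<kappa> = K00 cnj K11 + K01 cnj K10, and |\<kappa>|^2 is at most the product of the squared column
  norms of K. Summing over the Kraus operators, h' = h \<Sigma> \<kappa>, and Cauchy-Schwarz applied twice gives
  \<Sigma> |\<kappa>| \<le> 1 (trace preservation) and p q (\<Sigma> |\<kappa>|)^2 \<le> p' q'. This is necessity, already for IO.

  Conversely, strictly incoherent operations with real diagonal and antidiagonal Kraus operators
  realise every stochastic map of the populations, with transition probabilities x^2, y^2 (from 0)
  and v^2, u^2 (from 1), while multiplying the coherence by any factor of modulus at most x u + y v.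
  If p' lies between p and q, a mixture of the source populations gives factor 1; otherwise p lies
  between p' and q', and a mixture of the target populations gives factor sqrt (p' q' / (p q)).
\<close>

lemma UNIV_2_eq: "(UNIV :: 2 set) = {0, 1}"
proof -
  have "(2 :: 2) = 0" by simp
  then show ?thesis using UNIV_2 by auto
qed

lemma sum_UNIV_2: "sum f (UNIV :: 2 set) = f 0 + f 1"
  by (simp add: UNIV_2_eq)

lemma all_2_iff: "(\<forall>i :: 2. P i) \<longleftrightarrow> P 0 \<and> P 1"
  by (metis UNIV_2_eq UNIV_I insertE singletonD)

lemma mat2_nth [simp]:
  "mat2 a b c d $ 0 $ 0 = a" "mat2 a b c d $ 0 $ 1 = b"
  "mat2 a b c d $ 1 $ 0 = c" "mat2 a b c d $ 1 $ 1 = d"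
  by (simp_all add: mat2_def)

lemma mat2_eta: "A = mat2 (A $ 0 $ 0) (A $ 0 $ 1) (A $ 1 $ 0) (A $ 1 $ 1)"
  by (simp add: vec_eq_iff all_2_iff)

lemma mat2_mult:
  "mat2 a b c d ** mat2 a' b' c' d' = mat2 (a*a' + b*c') (a*b' + b*d') (c*a' + d*c') (c*b' + d*d')"
  by (simp add: vec_eq_iff all_2_iff matrix_matrix_mult_def sum_UNIV_2)

lemma mat2_add: "mat2 a b c d + mat2 a' b' c' d' = mat2 (a + a') (b + b') (c + c') (d + d')"
  by (simp add: vec_eq_iff all_2_iff)

lemma mat2_one: "mat 1 = mat2 1 0 0 1"
  by (simp add: vec_eq_iff all_2_iff mat_def)

lemma cadj_mat2: "cadj (mat2 a b c d) = mat2 (cnj a) (cnj c) (cnj b) (cnj d)"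
  by (simp add: vec_eq_iff all_2_iff cadj_def)

lemma is_diag_mat2: "is_diag (mat2 a b c d) \<longleftrightarrow> b = 0 \<and> c = 0"
  by (auto simp: is_diag_def all_2_iff)

lemma is_diag_eq_mat2: "is_diag \<delta> \<Longrightarrow> \<delta> = mat2 (\<delta> $ 0 $ 0) 0 0 (\<delta> $ 1 $ 1)"
  using mat2_eta[of \<delta>] by (simp add: is_diag_def)

definition real_sym2 :: "real \<Rightarrow> real \<Rightarrow> real \<Rightarrow> cmat2" where
  "real_sym2 p h q = mat2 (of_real p) (of_real h) (of_real h) (of_real q)"

lemma real_sym2_nth [simp]:
  "real_sym2 p h q $ 0 $ 0 = of_real p" "real_sym2 p h q $ 0 $ 1 = of_real h"
  "real_sym2 p h q $ 1 $ 0 = of_real h" "real_sym2 p h q $ 1 $ 1 = of_real q"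
  by (simp_all add: real_sym2_def)

lemma real_sym2_add:
  "real_sym2 p h q + real_sym2 p' h' q' = real_sym2 (p + p') (h + h') (q + q')"
  by (simp add: real_sym2_def mat2_add)

lemma mat_1_eq_real_sym2: "mat 1 = real_sym2 1 0 1"
  by (simp add: mat2_one real_sym2_def)

lemma qubit_eq_real_sym2: "qubit z r = real_sym2 ((1 + z) / 2) (r / 2) ((1 - z) / 2)"
  by (simp add: qubit_def real_sym2_def)

lemma sum_sq_le_mult_sum:
  fixes s P Q :: "'i \<Rightarrow> real"
  assumes "\<And>i. i \<in> I \<Longrightarrow> 0 \<le> P i \<and> 0 \<le> Q i \<and> (s i)\<^sup>2 \<le> P i * Q i"
  shows "(\<Sum>i\<in>I. s i)\<^sup>2 \<le> (\<Sum>i\<in>I. P i) * (\<Sum>i\<in>I. Q i)"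
proof -
  have "\<bar>s i\<bar> \<le> sqrt (P i) * sqrt (Q i)" if "i \<in> I" for i
  proof -
    have "\<bar>s i\<bar> = sqrt ((s i)\<^sup>2)" by simp
    also have "\<dots> \<le> sqrt (P i * Q i)" using assms[OF that] by (simp only: real_sqrt_le_mono)
    finally show ?thesis by (simp add: real_sqrt_mult)
  qed
  then have "\<bar>\<Sum>i\<in>I. s i\<bar> \<le> (\<Sum>i\<in>I. sqrt (P i) * sqrt (Q i))"
    by (intro order_trans[OF sum_abs sum_mono])
  then have "(\<Sum>i\<in>I. s i)\<^sup>2 \<le> (\<Sum>i\<in>I. sqrt (P i) * sqrt (Q i))\<^sup>2"
    using power_mono[of _ _ 2] by (metis abs_ge_zero power2_abs)
  also have "\<dots> \<le> (\<Sum>i\<in>I. (sqrt (P i))\<^sup>2) * (\<Sum>i\<in>I. (sqrt (Q i))\<^sup>2)"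
    by (rule Cauchy_Schwarz_ineq_sum)
  also have "\<dots> = (\<Sum>i\<in>I. P i) * (\<Sum>i\<in>I. Q i)"
    using assms by (simp cong: sum.cong)
  finally show ?thesis .
qed

lemma sum_list_map_eq_sum_nth: "sum_list (map f xs) = (\<Sum>i<length xs. f (xs ! i))"
  by (simp add: sum_list_sum_nth atLeast0LessThan)

lemma psd2_quadratic_form_nonneg:
  fixes p q h x y :: real
  assumes "0 \<le> p" "0 \<le> q" "h\<^sup>2 \<le> p * q"
  shows "0 \<le> p * x\<^sup>2 + q * y\<^sup>2 + 2 * h * x * y"
proof (cases "p = 0")
  case True
  then show ?thesis using assms by simp
next
  case False
  have "0 \<le> (p * x + h * y)\<^sup>2 + (p * q - h\<^sup>2) * y\<^sup>2" using assms by simp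
  also have "\<dots> = p * (p * x\<^sup>2 + q * y\<^sup>2 + 2 * h * x * y)" by (simp add: power2_eq_square algebra_simps)
  finally show ?thesis using False assms(1) by (simp add: zero_le_mult_iff)
qed

definition real_sym2_form ::
    "real \<Rightarrow> real \<Rightarrow> real \<Rightarrow> complex \<Rightarrow> complex \<Rightarrow> complex \<Rightarrow> complex \<Rightarrow> complex" where
  "real_sym2_form p h q a b c d = (a * p + b * h) * cnj c + (a * h + b * q) * cnj d"

lemma mat2_conj_real_sym2:
  "mat2 a b c d ** real_sym2 p h q ** cadj (mat2 a b c d) =
     mat2 (real_sym2_form p h q a b a b) (real_sym2_form p h q a b c d)
          (real_sym2_form p h q c d a b) (real_sym2_form p h q c d c d)"
  by (simp add: real_sym2_def real_sym2_form_def mat2_mult cadj_mat2)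

lemma real_sym2_form_diag_nonneg:
  assumes "0 \<le> p" "0 \<le> q" "h\<^sup>2 \<le> p * q"
  shows "0 \<le> Re (real_sym2_form p h q a b a b)"
proof -
  have "Re (real_sym2_form p h q a b a b) =
      (p * (Re a)\<^sup>2 + q * (Re b)\<^sup>2 + 2 * h * Re a * Re b) +
      (p * (Im a)\<^sup>2 + q * (Im b)\<^sup>2 + 2 * h * Im a * Im b)"
    by (simp add: real_sym2_form_def power2_eq_square algebra_simps)
  then show ?thesis using psd2_quadratic_form_nonneg[OF assms] by (simp add: add_nonneg_nonneg)
qed

lemma incoherent_kraus_pattern:
  assumes "\<forall>\<delta>. is_diag \<delta> \<longrightarrow> is_diag (K ** \<delta> ** cadj K)"
  shows "(K $ 0 $ 0 = 0 \<or> K $ 1 $ 0 = 0) \<and> (K $ 0 $ 1 = 0 \<or> K $ 1 $ 1 = 0)"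
proof -
  obtain a b c d where K: "K = mat2 a b c d" using mat2_eta by blast
  have "is_diag (K ** mat2 1 0 0 0 ** cadj K)" "is_diag (K ** mat2 0 0 0 1 ** cadj K)"
    using assms by (simp_all add: is_diag_mat2)
  then show ?thesis by (simp add: K mat2_mult cadj_mat2 is_diag_mat2)
qed

lemma real_sym2_form_offdiag_incoherent:
  assumes "(a = 0 \<or> c = 0) \<and> (b = 0 \<or> d = 0)"
  shows "real_sym2_form p h q a b c d = of_real h * (a * cnj d + b * cnj c)"
  using assms by (auto simp: real_sym2_form_def algebra_simps)

lemma real_sym2_form_diag_prod_incoherent:
  assumes "(a = 0 \<or> c = 0) \<and> (b = 0 \<or> d = 0)"
  shows "Re (real_sym2_form p h q a b a b) * Re (real_sym2_form p h q c d c d) =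
    p * q * (cmod (a * cnj d + b * cnj c))\<^sup>2"
  using assms
  by (auto simp: real_sym2_form_def norm_mult power_mult_distrib cmod_power2)
    (auto simp: power2_eq_square algebra_simps)

lemma cmod_sq_le_column_norms:
  "(cmod (a * cnj d + b * cnj c))\<^sup>2 \<le> ((cmod a)\<^sup>2 + (cmod c)\<^sup>2) * ((cmod b)\<^sup>2 + (cmod d)\<^sup>2)"
proof -
  have "cmod (a * cnj d + b * cnj c) \<le> cmod a * cmod d + cmod c * cmod b"
    using norm_triangle_ineq[of "a * cnj d" "b * cnj c"] by (simp add: norm_mult mult.commute)
  then have "(cmod (a * cnj d + b * cnj c))\<^sup>2 \<le> (cmod a * cmod d + cmod c * cmod b)\<^sup>2"
    by (simp add: power_mono)
  also have "\<dots> \<le> ((cmod a)\<^sup>2 + (cmod c)\<^sup>2) * ((cmod d)\<^sup>2 + (cmod b)\<^sup>2)"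
    using Cauchy_Schwarz_ineq_sum[of "\<lambda>i. if i = 0 then cmod a else cmod c"
        "\<lambda>i. if i = 0 then cmod d else cmod b" "{0::nat, 1}"]
    by simp
  finally show ?thesis by (simp add: add.commute)
qed

lemma Re_cadj_mult_self_diag:
  "Re ((cadj K ** K) $ 0 $ 0) = (cmod (K $ 0 $ 0))\<^sup>2 + (cmod (K $ 1 $ 0))\<^sup>2"
  "Re ((cadj K ** K) $ 1 $ 1) = (cmod (K $ 0 $ 1))\<^sup>2 + (cmod (K $ 1 $ 1))\<^sup>2"
  by (simp_all add: cadj_def matrix_matrix_mult_def sum_UNIV_2 cmod_power2 flip: power2_eq_square)

lemma kraus_column_norms_sum:
  assumes "(\<Sum>i\<in>I. cadj (K i) ** K i) = mat 1"
  shows "(\<Sum>i\<in>I. (cmod (K i $ 0 $ 0))\<^sup>2 + (cmod (K i $ 1 $ 0))\<^sup>2) = 1"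
    and "(\<Sum>i\<in>I. (cmod (K i $ 0 $ 1))\<^sup>2 + (cmod (K i $ 1 $ 1))\<^sup>2) = 1"
  using arg_cong[OF assms, of "\<lambda>M. Re (M $ 0 $ 0)"] arg_cong[OF assms, of "\<lambda>M. Re (M $ 1 $ 1)"]
  by (simp_all add: Re_cadj_mult_self_diag mat2_one)

lemma coherence_bound_of_factor:
  fixes h h' \<sigma> :: real
  assumes h'_le: "\<bar>h'\<bar> \<le> \<bar>h\<bar> * \<sigma>" and \<sigma>_le_1: "\<sigma> \<le> 1"
    and \<sigma>_bound: "p * q * \<sigma>\<^sup>2 \<le> p' * q'" and pq: "0 \<le> p * q"
  shows "\<bar>h'\<bar> \<le> \<bar>h\<bar> \<and> p * q * h'\<^sup>2 \<le> p' * q' * h\<^sup>2"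
proof
  show "\<bar>h'\<bar> \<le> \<bar>h\<bar>"
    using h'_le mult_left_le[OF \<sigma>_le_1 abs_ge_zero[of h]] by linarith
  have "h'\<^sup>2 \<le> h\<^sup>2 * \<sigma>\<^sup>2"
    using power_mono[OF h'_le abs_ge_zero, of 2] by (simp add: power_mult_distrib)
  then have "p * q * h'\<^sup>2 \<le> p * q * (h\<^sup>2 * \<sigma>\<^sup>2)"
    using pq by (rule mult_left_mono)
  also have "\<dots> = h\<^sup>2 * (p * q * \<sigma>\<^sup>2)"
    by (simp add: ac_simps)
  also have "\<dots> \<le> p' * q' * h\<^sup>2"
    using mult_left_mono[OF \<sigma>_bound zero_le_power2[of h]] by (simp add: mult.commute)
  finally show "p * q * h'\<^sup>2 \<le> p' * q' * h\<^sup>2" .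
qed

lemma incoherent_kraus_coherence_bound:
  fixes K :: "'i \<Rightarrow> cmat2"
  assumes pattern:
      "\<And>i. i \<in> I \<Longrightarrow> (K i $ 0 $ 0 = 0 \<or> K i $ 1 $ 0 = 0) \<and> (K i $ 0 $ 1 = 0 \<or> K i $ 1 $ 1 = 0)"
    and kraus: "(\<Sum>i\<in>I. cadj (K i) ** K i) = mat 1"
    and image: "(\<Sum>i\<in>I. K i ** real_sym2 p h q ** cadj (K i)) = real_sym2 p' h' q'"
    and psd: "0 \<le> p" "0 \<le> q" "h\<^sup>2 \<le> p * q"
  shows "\<bar>h'\<bar> \<le> \<bar>h\<bar> \<and> p * q * h'\<^sup>2 \<le> p' * q' * h\<^sup>2"
proof -
  define a b c d where "a i = K i $ 0 $ 0" and "b i = K i $ 0 $ 1"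
    and "c i = K i $ 1 $ 0" and "d i = K i $ 1 $ 1" for i
  have K: "K i = mat2 (a i) (b i) (c i) (d i)" for i
    unfolding a_def b_def c_def d_def by (rule mat2_eta)
  define \<kappa> where "\<kappa> i = a i * cnj (d i) + b i * cnj (c i)" for i
  define P Q where "P i = Re (real_sym2_form p h q (a i) (b i) (a i) (b i))"
    and "Q i = Re (real_sym2_form p h q (c i) (d i) (c i) (d i))" for i
  have pattern': "(a i = 0 \<or> c i = 0) \<and> (b i = 0 \<or> d i = 0)" if "i \<in> I" for i
    using pattern[OF that] by (simp add: a_def b_def c_def d_def)
  have sum_P: "(\<Sum>i\<in>I. P i) = p'" and sum_Q: "(\<Sum>i\<in>I. Q i) = q'"
    using arg_cong[OF image, of "\<lambda>M. Re (M $ 0 $ 0)"] arg_cong[OF image, of "\<lambda>M. Re (M $ 1 $ 1)"]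
    by (simp_all add: K mat2_conj_real_sym2 P_def Q_def)
  have "of_real h' = (\<Sum>i\<in>I. of_real h * \<kappa> i)"
    using arg_cong[OF image, of "\<lambda>M. M $ 0 $ 1"]
    by (simp add: K mat2_conj_real_sym2 \<kappa>_def real_sym2_form_offdiag_incoherent pattern'
        cong: sum.cong)
  then have "cmod (of_real h') = cmod (of_real h * (\<Sum>i\<in>I. \<kappa> i))"
    by (simp add: sum_distrib_left)
  then have h': "\<bar>h'\<bar> = \<bar>h\<bar> * cmod (\<Sum>i\<in>I. \<kappa> i)"
    by (simp add: norm_mult)
  define \<sigma> where "\<sigma> = (\<Sum>i\<in>I. cmod (\<kappa> i))"
  have h'_le: "\<bar>h'\<bar> \<le> \<bar>h\<bar> * \<sigma>"
    unfolding h' \<sigma>_def by (simp add: mult_left_mono norm_sum)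
  have "\<sigma>\<^sup>2 \<le>
      (\<Sum>i\<in>I. (cmod (a i))\<^sup>2 + (cmod (c i))\<^sup>2) * (\<Sum>i\<in>I. (cmod (b i))\<^sup>2 + (cmod (d i))\<^sup>2)"
    unfolding \<sigma>_def by (rule sum_sq_le_mult_sum) (simp add: \<kappa>_def cmod_sq_le_column_norms)
  then have \<sigma>_le_1: "\<sigma> \<le> 1"
    using kraus_column_norms_sum[OF kraus] unfolding a_def b_def c_def d_def
    by (simp add: \<sigma>_def power_le_one_iff sum_nonneg abs_square_le_1)
  have \<sigma>_bound: "p * q * \<sigma>\<^sup>2 \<le> p' * q'"
  proof -
    have "(\<Sum>i\<in>I. sqrt (p * q) * cmod (\<kappa> i))\<^sup>2 \<le> (\<Sum>i\<in>I. P i) * (\<Sum>i\<in>I. Q i)"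
      using psd pattern' by (intro sum_sq_le_mult_sum)
        (simp add: P_def Q_def \<kappa>_def real_sym2_form_diag_nonneg real_sym2_form_diag_prod_incoherent
          power_mult_distrib)
    then show ?thesis
      using psd by (simp add: \<sigma>_def sum_P sum_Q power_mult_distrib flip: sum_distrib_left)
  qed
  show ?thesis
    using h'_le \<sigma>_le_1 \<sigma>_bound psd(1,2) by (intro coherence_bound_of_factor) simp_all
qed

lemma IO_coherence_bound:
  assumes IO: "IO Ks" and image: "apply_kraus Ks (real_sym2 p h q) = real_sym2 p' h' q'"
    and psd: "0 \<le> p" "0 \<le> q" "h\<^sup>2 \<le> p * q"
  shows "\<bar>h'\<bar> \<le> \<bar>h\<bar> \<and> p * q * h'\<^sup>2 \<le> p' * q' * h\<^sup>2"
proof (rule incoherent_kraus_coherence_bound[OF _ _ _ psd])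
  fix i assume "i \<in> {..<length Ks}"
  then show "(Ks ! i $ 0 $ 0 = 0 \<or> Ks ! i $ 1 $ 0 = 0) \<and> (Ks ! i $ 0 $ 1 = 0 \<or> Ks ! i $ 1 $ 1 = 0)"
    using IO by (intro incoherent_kraus_pattern) (auto simp: IO_def)
next
  show "(\<Sum>i<length Ks. cadj (Ks ! i) ** Ks ! i) = mat 1"
    using IO by (simp add: IO_def is_kraus_def sum_list_map_eq_sum_nth)
  show "(\<Sum>i<length Ks. Ks ! i ** real_sym2 p h q ** cadj (Ks ! i)) = real_sym2 p' h' q'"
    using image by (simp add: apply_kraus_def sum_list_map_eq_sum_nth)
qed

definition diag_kraus :: "real \<Rightarrow> real \<Rightarrow> cmat2" where
  "diag_kraus a b = mat2 (of_real a) 0 0 (of_real b)"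

definition flip_kraus :: "real \<Rightarrow> real \<Rightarrow> cmat2" where
  "flip_kraus a b = mat2 0 (of_real b) (of_real a) 0"

lemma diag_kraus_conj_real_sym2:
  "diag_kraus a b ** real_sym2 p h q ** cadj (diag_kraus a b) = real_sym2 (a\<^sup>2 * p) (a * b * h) (b\<^sup>2 * q)"
  by (simp add: diag_kraus_def real_sym2_def mat2_mult cadj_mat2 power2_eq_square mult_ac)

lemma flip_kraus_conj_real_sym2:
  "flip_kraus a b ** real_sym2 p h q ** cadj (flip_kraus a b) = real_sym2 (b\<^sup>2 * q) (a * b * h) (a\<^sup>2 * p)"
  by (simp add: flip_kraus_def real_sym2_def mat2_mult cadj_mat2 power2_eq_square mult_ac)

lemma cadj_mult_diag_kraus: "cadj (diag_kraus a b) ** diag_kraus a b = real_sym2 (a\<^sup>2) 0 (b\<^sup>2)"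
  by (simp add: diag_kraus_def real_sym2_def mat2_mult cadj_mat2 power2_eq_square mult_ac)

lemma cadj_mult_flip_kraus: "cadj (flip_kraus a b) ** flip_kraus a b = real_sym2 (a\<^sup>2) 0 (b\<^sup>2)"
  by (simp add: flip_kraus_def real_sym2_def mat2_mult cadj_mat2 power2_eq_square)

lemma diag_kraus_strictly_incoherent:
  assumes "is_diag \<delta>"
  shows "is_diag (diag_kraus a b ** \<delta> ** cadj (diag_kraus a b))"
    and "is_diag (cadj (diag_kraus a b) ** \<delta> ** diag_kraus a b)"
  by (subst is_diag_eq_mat2[OF assms], simp add: diag_kraus_def mat2_mult cadj_mat2 is_diag_mat2)+

lemma flip_kraus_strictly_incoherent:
  assumes "is_diag \<delta>"
  shows "is_diag (flip_kraus a b ** \<delta> ** cadj (flip_kraus a b))"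
    and "is_diag (cadj (flip_kraus a b) ** \<delta> ** flip_kraus a b)"
  by (subst is_diag_eq_mat2[OF assms], simp add: flip_kraus_def mat2_mult cadj_mat2 is_diag_mat2)+

lemma SIO_reaches_of_stochastic:
  fixes x y u v t :: real
  assumes x_y: "x\<^sup>2 + y\<^sup>2 = 1" and u_v: "u\<^sup>2 + v\<^sup>2 = 1"
    and p': "p' = x\<^sup>2 * p + v\<^sup>2 * q" and q': "q' = y\<^sup>2 * p + u\<^sup>2 * q"
    and t: "\<bar>t\<bar> \<le> x * u + y * v"
  shows "\<exists>Ks. SIO Ks \<and> apply_kraus Ks (real_sym2 p h q) = real_sym2 p' (t * h) q'"
proof -
  txt \<open>Two copies of the coupling channel, scaled by \<alpha> and \<beta> and the second with the sign of
    its 1-column flipped, dephase the coherence by the factor c = \<alpha>^2 - \<beta>^2. If W = 0 then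
    t = 0, and c = t / 0 = 0 still works.\<close>
  define W where "W = x * u + y * v"
  define c where "c = t / W"
  have c_le_1: "\<bar>c\<bar> \<le> 1" and cW: "c * W = t"
    using t by (auto simp: c_def W_def abs_divide divide_le_eq_1)
  define \<alpha> \<beta> where "\<alpha> = sqrt ((1 + c) / 2)" and "\<beta> = sqrt ((1 - c) / 2)"
  have \<alpha>_\<beta>: "\<alpha>\<^sup>2 + \<beta>\<^sup>2 = 1" "\<alpha>\<^sup>2 - \<beta>\<^sup>2 = c"
    using c_le_1 by (simp_all add: \<alpha>_def \<beta>_def abs_le_iff field_simps)
  define Ks where "Ks = [diag_kraus (\<alpha> * x) (\<alpha> * u), flip_kraus (\<alpha> * y) (\<alpha> * v),
    diag_kraus (\<beta> * x) (- \<beta> * u), flip_kraus (\<beta> * y) (- \<beta> * v)]"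
  have "is_kraus Ks"
  proof -
    have "sum_list (map (\<lambda>K. cadj K ** K) Ks) =
        real_sym2 ((\<alpha>\<^sup>2 + \<beta>\<^sup>2) * (x\<^sup>2 + y\<^sup>2)) 0 ((\<alpha>\<^sup>2 + \<beta>\<^sup>2) * (u\<^sup>2 + v\<^sup>2))"
      by (simp add: Ks_def cadj_mult_diag_kraus cadj_mult_flip_kraus real_sym2_add
          power_mult_distrib algebra_simps)
    then show ?thesis using \<alpha>_\<beta> x_y u_v by (simp add: is_kraus_def mat_1_eq_real_sym2)
  qed
  then have "SIO Ks"
    by (auto simp: SIO_def IO_def Ks_def diag_kraus_strictly_incoherent flip_kraus_strictly_incoherent)
  moreover have "apply_kraus Ks (real_sym2 p h q) =
      real_sym2 ((\<alpha>\<^sup>2 + \<beta>\<^sup>2) * (x\<^sup>2 * p + v\<^sup>2 * q)) ((\<alpha>\<^sup>2 - \<beta>\<^sup>2) * W * h)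
        ((\<alpha>\<^sup>2 + \<beta>\<^sup>2) * (y\<^sup>2 * p + u\<^sup>2 * q))"
    by (simp add: apply_kraus_def Ks_def diag_kraus_conj_real_sym2 flip_kraus_conj_real_sym2
        real_sym2_add W_def power2_eq_square algebra_simps)
  ultimately show ?thesis
    using \<alpha>_\<beta> cW p' q' by auto
qed

lemma SIO_reaches_diagonal:
  assumes "p + q = 1" "p' + q' = 1" "0 \<le> p'" "0 \<le> q'"
  shows "\<exists>Ks. SIO Ks \<and> apply_kraus Ks (real_sym2 p h q) = real_sym2 p' 0 q'"
proof -
  have "p' = (sqrt p')\<^sup>2 * p + (sqrt p')\<^sup>2 * q" "q' = (sqrt q')\<^sup>2 * p + (sqrt q')\<^sup>2 * q"
    using assms by (simp_all flip: distrib_left)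
  then show ?thesis
    using SIO_reaches_of_stochastic[of "sqrt p'" "sqrt q'" "sqrt q'" "sqrt p'" p' p q q' 0 h] assms
    by simp
qed

lemma SIO_reaches_of_source_mixture:
  assumes "p + q = 1" "p' + q' = 1" "0 \<le> s" "s \<le> 1" "p' = s * p + (1 - s) * q" "\<bar>t\<bar> \<le> 1"
  shows "\<exists>Ks. SIO Ks \<and> apply_kraus Ks (real_sym2 p h q) = real_sym2 p' (t * h) q'"
proof (rule SIO_reaches_of_stochastic)
  show "(sqrt s)\<^sup>2 + (sqrt (1 - s))\<^sup>2 = 1" and "(sqrt s)\<^sup>2 + (sqrt (1 - s))\<^sup>2 = 1"
    using assms by simp_all
  show "p' = (sqrt s)\<^sup>2 * p + (sqrt (1 - s))\<^sup>2 * q" "q' = (sqrt (1 - s))\<^sup>2 * p + (sqrt s)\<^sup>2 * q"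
    using assms by (simp_all add: algebra_simps)
  show "\<bar>t\<bar> \<le> sqrt s * sqrt s + sqrt (1 - s) * sqrt (1 - s)"
    using assms by simp
qed

lemma SIO_reaches_of_target_mixture:
  assumes "p + q = 1" "p' + q' = 1" "0 < p" "0 < q" "0 \<le> p'" "0 \<le> q'"
    and "0 \<le> s" "s \<le> 1" "p = s * p' + (1 - s) * q'" "t\<^sup>2 * (p * q) \<le> p' * q'"
  shows "\<exists>Ks. SIO Ks \<and> apply_kraus Ks (real_sym2 p h q) = real_sym2 p' (t * h) q'"
proof (rule SIO_reaches_of_stochastic)
  define x y u v where "x = sqrt (s * (p' / p))" and "y = sqrt ((1 - s) * (q' / p))"
    and "u = sqrt (s * (q' / q))" and "v = sqrt ((1 - s) * (p' / q))"
  have q: "q = s * q' + (1 - s) * p'"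
    using assms(1,2,9) by (simp add: algebra_simps)
  have squares: "x\<^sup>2 = s * (p' / p)" "y\<^sup>2 = (1 - s) * (q' / p)"
    "u\<^sup>2 = s * (q' / q)" "v\<^sup>2 = (1 - s) * (p' / q)"
    using assms by (simp_all add: x_def y_def u_def v_def)
  show "x\<^sup>2 + y\<^sup>2 = 1" "u\<^sup>2 + v\<^sup>2 = 1" "p' = x\<^sup>2 * p + v\<^sup>2 * q" "q' = y\<^sup>2 * p + u\<^sup>2 * q"
    unfolding squares using assms(1-9) q by (simp_all add: field_simps)
  define e where "e = sqrt (p' * q' / (p * q))"
  have "x * u = sqrt (s\<^sup>2 * (p' * q' / (p * q)))" "y * v = sqrt ((1 - s)\<^sup>2 * (p' * q' / (p * q)))"
    unfolding x_def y_def u_def v_def real_sqrt_mult[symmetric]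
    by (simp_all add: power2_eq_square field_simps)
  then have "x * u = s * e" "y * v = (1 - s) * e"
    using assms(7,8) by (simp_all add: e_def real_sqrt_mult del: times_divide_eq_right)
  moreover have "\<bar>t\<bar> \<le> e"
    using assms real_sqrt_le_mono[of "t\<^sup>2" "p' * q' / (p * q)"] by (simp add: e_def field_simps)
  ultimately show "\<bar>t\<bar> \<le> x * u + y * v"
    by (simp add: algebra_simps)
qed

lemma convex_combination_between:
  fixes w a b :: real
  assumes "(w - a) * (w - b) \<le> 0"
  obtains s where "0 \<le> s" "s \<le> 1" "w = s * a + (1 - s) * b"
proof -
  have "w \<in> closed_segment b a"
    using assms by (auto simp: closed_segment_eq_real_ivl mult_le_0_iff)
  then show ?thesis
    using that by (auto simp: in_segment algebra_simps)
qed

lemma SIO_reachable_real_sym2: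
  fixes p q h p' q' h' :: real
  assumes trace: "p + q = 1" "p' + q' = 1"
    and nonneg: "0 \<le> p" "0 \<le> q" "0 \<le> p'" "0 \<le> q'" and psd: "h\<^sup>2 \<le> p * q"
    and coherence: "\<bar>h'\<bar> \<le> \<bar>h\<bar>" "p * q * h'\<^sup>2 \<le> p' * q' * h\<^sup>2"
  shows "\<exists>Ks. SIO Ks \<and> apply_kraus Ks (real_sym2 p h q) = real_sym2 p' h' q'"
proof (cases "h = 0")
  case True
  then show ?thesis using SIO_reaches_diagonal[OF trace nonneg(3,4)] coherence(1) by simp
next
  case False
  define t where "t = h' / h"
  have h': "h' = t * h" using False by (simp add: t_def)
  have t_le_1: "\<bar>t\<bar> \<le> 1"
    using coherence(1) False by (simp add: t_def abs_divide divide_le_eq_1)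
  have t_sq: "t\<^sup>2 * (p * q) \<le> p' * q'"
    using coherence(2) False by (simp add: h' power_mult_distrib algebra_simps)
  have pos: "0 < p" "0 < q"
    using psd False nonneg(1,2) by (auto simp: less_le zero_less_power2 dest: order.strict_trans1[of 0 "h\<^sup>2"])
  have qs: "q = 1 - p" "q' = 1 - p'"
    using trace by linarith+
  have "(p' - p) * (p' - q) = - ((p - p') * (p - q'))"
    unfolding qs by (simp add: algebra_simps)
  then consider "(p' - p) * (p' - q) \<le> 0" | "(p - p') * (p - q') \<le> 0"
    by linarith
  then show ?thesis
  proof cases
    case 1
    then obtain s where "0 \<le> s" "s \<le> 1" "p' = s * p + (1 - s) * q"
      by (rule convex_combination_between)
    from SIO_reaches_of_source_mixture[OF trace this t_le_1] show ?thesis unfolding h' .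
  next
    case 2
    then obtain s where "0 \<le> s" "s \<le> 1" "p = s * p' + (1 - s) * q'"
      by (rule convex_combination_between)
    from SIO_reaches_of_target_mixture[OF trace pos nonneg(3,4) this t_sq] show ?thesis unfolding h' .
  qed
qed

theorem theorem2:
  fixes z r z' r' :: real
  assumes "z\<^sup>2 + r\<^sup>2 \<le> 1" and "z'\<^sup>2 + r'\<^sup>2 \<le> 1"
  shows "((\<exists>Ks. IO Ks \<and> apply_kraus Ks (qubit z r) = qubit z' r') \<longleftrightarrow>
            ((1 - z\<^sup>2) * r'\<^sup>2 \<le> (1 - z'\<^sup>2) * r\<^sup>2 \<and> \<bar>r'\<bar> \<le> \<bar>r\<bar>))
       \<and> ((\<exists>Ks. SIO Ks \<and> apply_kraus Ks (qubit z r) = qubit z' r') \<longleftrightarrow>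
            ((1 - z\<^sup>2) * r'\<^sup>2 \<le> (1 - z'\<^sup>2) * r\<^sup>2 \<and> \<bar>r'\<bar> \<le> \<bar>r\<bar>))"
proof -
  define p q p' q' where "p = (1 + z) / 2" and "q = (1 - z) / 2" and "p' = (1 + z') / 2" and "q' = (1 - z') / 2"
  have states: "qubit z r = real_sym2 p (r / 2) q" "qubit z' r' = real_sym2 p' (r' / 2) q'"
    by (simp_all add: p_def q_def p'_def q'_def qubit_eq_real_sym2)
  have products: "p * q = (1 - z\<^sup>2) / 4" "p' * q' = (1 - z'\<^sup>2) / 4"
    by (simp_all add: p_def q_def p'_def q'_def power2_eq_square field_simps)
  have "z\<^sup>2 \<le> 1" "z'\<^sup>2 \<le> 1"
    using assms zero_le_power2[of r] zero_le_power2[of r'] by linarith+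
  then have trace_nonneg: "p + q = 1" "p' + q' = 1" "0 \<le> p" "0 \<le> q" "0 \<le> p'" "0 \<le> q'"
    by (auto simp: p_def q_def p'_def q'_def abs_square_le_1 abs_le_iff field_simps)
  have psd: "(r / 2)\<^sup>2 \<le> p * q"
    using assms(1) by (simp add: products power_divide)
  have conditions: "((1 - z\<^sup>2) * r'\<^sup>2 \<le> (1 - z'\<^sup>2) * r\<^sup>2 \<and> \<bar>r'\<bar> \<le> \<bar>r\<bar>) \<longleftrightarrow>
      (\<bar>r' / 2\<bar> \<le> \<bar>r / 2\<bar> \<and> p * q * (r' / 2)\<^sup>2 \<le> p' * q' * (r / 2)\<^sup>2)"
    by (auto simp: products power_divide)
  show ?thesis
    unfolding states conditions
    using IO_coherence_bound[OF _ _ trace_nonneg(3,4) psd] SIO_reachable_real_sym2[OF trace_nonneg psd]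
    unfolding SIO_def by blast
qed

end
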